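(* Consider the partial-order process prior described in the context with covariate effects set to zero. Fix any actor $j\in\mathcal{M}$, and for a time series $h=(h^{(t)})_{t=B}^E\in\mathcal{H}^{(B,E)}$ let $h_{-j}=(h^{(t)}[\mathcal{M}_t\setminus\{j\}])_{t=B}^E$ be the time series of suborders obtained by deleting $j$. Let $\pi_{\mathcal{H}^{(B,E)}}(\cdot\mid\beta=0)$ denote the marginal law of $h$ generated from the actor set $\mathcal{M}$, and let $\pi_{\mathcal{H}^{(B,E)}_{-j}}(\cdot\mid\beta=0)$ denote the marginal law of the time series of partial orders generated by the same model from the actor set $\mathcal{M}\setminus\{j\}$ (i.e. using only the latent processes $U_{j'}$, $j'\neq j$, with active sets $\mathcal{M}_t\setminus\{j\}$). Then for every $g\in\mathcal{H}^{(B,E)}_{-j}$, \[ \pi_{\mathcal{H}^{(B,E)}_{-j}}(g\mid\beta=0)=\sum_{h\in\mathcal{H}^{(B,E)}}\mathbb{I}_{g=h_{-j}}\,\pi_{\mathcal{H}^{(B,E)}}(h\mid\beta=0). \]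
   Context: A (strict) partial order on a finite set $A$ is a set $H\subseteq A\times A$ of pairs $(i,j)$ (read "$i\succ j$") that is irreflexive, acyclic and transitively closed; $\mathcal{H}_A$ denotes the set of all partial orders on $A$. For $O\subseteq A$ the suborder is $H[O]=\{(j_1,j_2)\in H:\{j_1,j_2\}\subseteq O\}$. Setting: integer times $t\in[B,E]=\{B,B+1,\dots,E\}$; a finite set of actors $\mathcal{M}$; each actor $j$ has a known activity interval $[b_j,e_j]\subseteq[B,E]$; $\mathcal{M}_t=\{j\in\mathcal{M}:b_j\le t\le e_j\}$. Let $\mathcal{H}^{(B,E)}=\mathcal{H}_{\mathcal{M}_B}\times\cdots\times\mathcal{H}_{\mathcal{M}_E}$ and $\mathcal{H}^{(B,E)}_{-j}=\mathcal{H}_{\mathcal{M}_B\setminus\{j\}}\times\cdots\times\mathcal{H}_{\mathcal{M}_E\setminus\{j\}}$. Prior (with zero covariate effects): fix an integer $K\ge1$ and $\gamma>0$. Draw $\rho\sim\mathrm{Beta}(1,\gamma)$ and $\theta\sim\mathrm{Unif}(0,1)$. Let $\Sigma^{(\rho)}$ be the $K\times K$ matrix with diagonal entries $1$ and off-diagonal entries $\rho$. Independently for each $j\in\mathcal{M}$, generate a process $U_j=(U_j^{(t)})_{t=b_j}^{e_j}$ in $\mathbb{R}^K$ by $U_j^{(b_j)}\sim N(0_K,\Sigma^{(\rho)}/(1-\theta^2))$ and $U_j^{(t)}=\theta U_j^{(t-1)}+\epsilon_j^{(t)}$ for $t=b_j+1,\dots,e_j$ with $\epsilon_j^{(t)}\sim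 N(0_K,\Sigma^{(\rho)})$ i.i.d. Set $Z_j^{(t)}=U_j^{(t)}$ and, for each $t$, define the partial order \[ h^{(t)}=\{(i,j)\in\mathcal{M}_t\times\mathcal{M}_t: Z^{(t)}_{i,k}>Z^{(t)}_{j,k}\text{ for all }k=1,\dots,K\}. \] The time series $h=(h^{(t)})_{t=B}^E\in\mathcal{H}^{(B,E)}$ has marginal law $\pi_{\mathcal{H}^{(B,E)}}(h\mid\beta=0)$, obtained by integrating over $U$, $\rho$ and $\theta$. *)

theory Defs
  imports "HOL-Analysis.Analysis" "HOL-Probability.Probability"
begin

definition partial_orders :: "'a set \<Rightarrow> ('a \<times> 'a) set set" where
  "partial_orders A = {H. H \<subseteq> A \<times> A \<and> irrefl H \<and> acyclic H \<and> trans H}"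

definition suborder :: "('a \<times> 'a) set \<Rightarrow> 'a set \<Rightarrow> ('a \<times> 'a) set" where
  "suborder H O' = {(j1, j2) \<in> H. j1 \<in> O' \<and> j2 \<in> O'}"

definition active :: "'a set \<Rightarrow> ('a \<Rightarrow> int) \<Rightarrow> ('a \<Rightarrow> int) \<Rightarrow> int \<Rightarrow> 'a set" where
  "active M b e t = {j \<in> M. b j \<le> t \<and> t \<le> e j}"

definition HBE :: "'a set \<Rightarrow> ('a \<Rightarrow> int) \<Rightarrow> ('a \<Rightarrow> int) \<Rightarrow> int \<Rightarrow> int
    \<Rightarrow> (int \<Rightarrow> ('a \<times> 'a) set) set" where
  "HBE M b e B E = {h. (\<forall>t \<in> {B..E}. h t \<in> partial_orders (active M b e t))
                        \<and> (\<forall>t. t \<notin> {B..E} \<longrightarrow> h t = {})}"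

definition delete_actor :: "'a set \<Rightarrow> ('a \<Rightarrow> int) \<Rightarrow> ('a \<Rightarrow> int) \<Rightarrow> int \<Rightarrow> int \<Rightarrow> 'a
    \<Rightarrow> (int \<Rightarrow> ('a \<times> 'a) set) \<Rightarrow> (int \<Rightarrow> ('a \<times> 'a) set)" where
  "delete_actor M b e B E j h =
     (\<lambda>t. if t \<in> {B..E} then suborder (h t) (active M b e t - {j}) else {})"

definition beta_density :: "real \<Rightarrow> real \<Rightarrow> real \<Rightarrow> real" where
  "beta_density a b x =
     (if 0 < x \<and> x < 1 then x powr (a - 1) * (1 - x) powr (b - 1) / Beta a b else 0)"

definition beta_measure :: "real \<Rightarrow> real \<Rightarrow> real measure" where
  "beta_measure a b = density lborel (\<lambda>x. ennreal (beta_density a b x))"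

definition unif01 :: "real measure" where
  "unif01 = uniform_measure lborel {0<..<1}"

definition mvn_density :: "real^'k^'k \<Rightarrow> real^'k \<Rightarrow> real" where
  "mvn_density S x =
     exp (- (x \<bullet> (matrix_inv S *v x)) / 2) / sqrt ((2 * pi) ^ CARD('k) * det S)"

definition mvn :: "real^'k^'k \<Rightarrow> (real^'k) measure" where
  "mvn S = density lborel (\<lambda>x. ennreal (mvn_density S x))"

definition Sigma_rho :: "real \<Rightarrow> real^'k^'k" where
  "Sigma_rho \<rho> = (\<chi> i k. if i = k then 1 else \<rho>)"

text \<open>Innovations of actor j: x(b_j) = U^(b_j) ~ N(0, Sigma/(1-theta^2)),
  x(t) = eps^(t) ~ N(0, Sigma) for t = b_j+1..e_j, all independent.\<close>
definition actor_innov :: "real \<Rightarrow> real \<Rightarrow> int \<Rightarrow> int \<Rightarrow> (int \<Rightarrow> real^'k) measure" where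
  "actor_innov \<rho> \<theta> bj ej =
     PiM {bj..ej} (\<lambda>t. if t = bj then mvn ((1 / (1 - \<theta>\<^sup>2)) *\<^sub>R Sigma_rho \<rho>)
                                 else mvn (Sigma_rho \<rho>))"

text \<open>ar theta bj x n = U^(bj + n), with U^(bj) = x bj, U^(t) = theta U^(t-1) + x t.\<close>
fun ar :: "real \<Rightarrow> int \<Rightarrow> (int \<Rightarrow> real^'k) \<Rightarrow> nat \<Rightarrow> real^'k" where
  "ar \<theta> bj x 0 = x bj"
| "ar \<theta> bj x (Suc n) = \<theta> *\<^sub>R ar \<theta> bj x n + x (bj + int (Suc n))"

definition latent_U :: "real \<Rightarrow> ('a \<Rightarrow> int) \<Rightarrow> ('a \<Rightarrow> int \<Rightarrow> real^'k) \<Rightarrow> 'a \<Rightarrow> int \<Rightarrow> real^'k" where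
  "latent_U \<theta> b x j t = ar \<theta> (b j) (x j) (nat (t - b j))"

definition latent_measure :: "'a set \<Rightarrow> ('a \<Rightarrow> int) \<Rightarrow> ('a \<Rightarrow> int) \<Rightarrow> real \<Rightarrow> real
    \<Rightarrow> ('a \<Rightarrow> int \<Rightarrow> real^'k) measure" where
  "latent_measure M b e \<rho> \<theta> = PiM M (\<lambda>j. actor_innov \<rho> \<theta> (b j) (e j))"

text \<open>The partial-order time series induced by Z = U (zero covariate effects).\<close>
definition po_series :: "'a set \<Rightarrow> ('a \<Rightarrow> int) \<Rightarrow> ('a \<Rightarrow> int) \<Rightarrow> int \<Rightarrow> int \<Rightarrow> real
    \<Rightarrow> ('a \<Rightarrow> int \<Rightarrow> real^'k) \<Rightarrow> (int \<Rightarrow> ('a \<times> 'a) set)" where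
  "po_series M b e B E \<theta> x =
     (\<lambda>t. if t \<in> {B..E} then
             {(i, i'). i \<in> active M b e t \<and> i' \<in> active M b e t \<and>
                (\<forall>k. latent_U \<theta> b x i t $ k > latent_U \<theta> b x i' t $ k)}
          else {})"

definition prior_prob :: "'k::finite itself \<Rightarrow> 'a set \<Rightarrow> ('a \<Rightarrow> int) \<Rightarrow> ('a \<Rightarrow> int) \<Rightarrow> int \<Rightarrow> int
    \<Rightarrow> real \<Rightarrow> (int \<Rightarrow> ('a \<times> 'a) set) \<Rightarrow> real" where
  "prior_prob K M b e B E \<gamma> h =
     (\<integral>\<rho>. (\<integral>\<theta>.
        measure (latent_measure M b e \<rho> \<theta> :: ('a \<Rightarrow> int \<Rightarrow> real^'k) measure)
          {x \<in> space (latent_measure M b e \<rho> \<theta>). po_series M b e B E \<theta> x = h}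
      \<partial>unif01) \<partial>beta_measure 1 \<gamma>)"

end

theory Submission
  imports Defs
begin

text \<open>For fixed \<open>\<rho>\<close> and \<open>\<theta>\<close> the latent processes of different actors are independent, and each
  of them has a probability law: the normal densities integrate to one, which follows from the
  explicit inverse and determinant of the equicorrelation matrix \<open>Sigma_rho \<rho>\<close> and a Gaussian
  linearisation of the quadratic form. Hence the law of the processes of \<open>M - {j}\<close> is the
  marginal of the law of the processes of \<open>M\<close>. Deleting \<open>j\<close> from the series generated by all
  processes gives the series generated by the remaining ones, so the event that the smaller
  model produces \<open>g\<close> is the disjoint union of the events that the full model produces some \<open>h\<close>
  with \<open>h\<^sub>-\<^sub>j = g\<close>. This identity of conditional probabilities survives integration over
  \<open>\<theta>\<close> and \<open>\<rho>\<close>; the integrals exist because the conditional probabilities are bounded and,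
  via a density with respect to Lebesgue measure, jointly measurable in \<open>(\<rho>, \<theta>)\<close>.\<close>

section \<open>The equicorrelation matrix\<close>

lemma Sigma_rho_nth [simp]: "Sigma_rho \<rho> $ i $ k = (if i = k then 1 else \<rho>)"
  by (simp add: Sigma_rho_def)

lemma sum_Sigma_rho_row: "(\<Sum>l\<in>UNIV. if k = l then 1 else \<rho>) = 1 + (real CARD('n) - 1) * \<rho>"
  for k :: "'n::finite"
  by (subst sum.remove[of _ k]) (simp_all add: card_Diff_singleton of_nat_diff)

lemma det_diagonal_except_row:
  fixes A :: "'a::comm_ring_1^'n::finite^'n"
  assumes zero: "\<And>k l. k \<noteq> i \<Longrightarrow> l \<noteq> k \<Longrightarrow> A $ k $ l = 0"
  shows "det A = (\<Prod>k\<in>UNIV. A $ k $ k)"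
proof -
  have "\<forall>p \<in> {p. p permutes UNIV} - {id}. of_int (sign p) * (\<Prod>k\<in>UNIV. A $ k $ p k) = 0"
  proof (intro ballI)
    fix p :: "'n \<Rightarrow> 'n" assume "p \<in> {p. p permutes UNIV} - {id}"
    then have p: "p permutes UNIV" "p \<noteq> id" by auto
    obtain k where "k \<noteq> i" "p k \<noteq> k"
    proof (cases "p i = i")
      case True
      from p(2) obtain k where "p k \<noteq> k" by (auto simp: fun_eq_iff)
      with True that show thesis by metis
    next
      case False
      have "p (inv p i) = i" using permutes_inverses(1)[OF p(1)] .
      with False that show thesis by metis
    qed
    then show "of_int (sign p) * (\<Prod>k\<in>UNIV. A $ k $ p k) = 0" using zero by (subst prod_zero) auto
  qed
  from sum.mono_neutral_cong_left[OF finite_permutations[OF finite] _ this] show ?thesis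
    unfolding det_def by (simp add: permutes_id sign_id)
qed

lemma det_Sigma_rho:
  "det (Sigma_rho \<rho> :: real^'n::finite^'n) = (1 - \<rho>) ^ (CARD('n) - 1) * (1 + (real CARD('n) - 1) * \<rho>)"
proof -
  obtain i :: 'n where True by blast
  define s where "s = 1 + (real CARD('n) - 1) * \<rho>"
  \<comment> \<open>\<open>C\<close> adds all columns to column \<open>i\<close> and \<open>L\<close> subtracts row \<open>i\<close> from the other rows;
    both have determinant 1, and \<open>L ** Sigma_rho \<rho> ** C\<close> is diagonal outside row \<open>i\<close>.\<close>
  define C :: "real^'n^'n" where "C = (\<chi> k l. if l = i \<or> k = l then 1 else 0)"
  define L :: "real^'n^'n" where "L = (\<chi> k l. if k = l then 1 else if l = i then -1 else 0)"
  have "det C = det (transpose C)" by simp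
  also have "\<dots> = 1" by (subst det_diagonal_except_row[of i]) (auto simp: C_def transpose_def)
  finally have det_C: "det C = 1" .
  have "det L = det (transpose L)" by simp
  also have "\<dots> = 1" by (subst det_diagonal_except_row[of i]) (auto simp: L_def transpose_def)
  finally have det_L: "det L = 1" .
  have SC: "(Sigma_rho \<rho> ** C) $ k $ l = (if l = i then s else Sigma_rho \<rho> $ k $ l)" for k l
  proof (cases "l = i")
    case True
    then show ?thesis by (simp add: matrix_matrix_mult_def C_def s_def sum_Sigma_rho_row)
  next
    case False
    have "(Sigma_rho \<rho> ** C) $ k $ l = (\<Sum>m\<in>UNIV. if m = l then Sigma_rho \<rho> $ k $ m else 0)"
      unfolding matrix_matrix_mult_def vec_lambda_beta by (rule sum.cong) (auto simp: C_def False)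
    then show ?thesis using False by simp
  qed
  have LX: "(L ** X) $ k $ l = X $ k $ l - (if k = i then 0 else X $ i $ l)" for X :: "real^'n^'n" and k l
  proof -
    have "(L ** X) $ k $ l
        = (\<Sum>m\<in>UNIV. (if m = k then X $ m $ l else 0) - (if m = i \<and> k \<noteq> i then X $ m $ l else 0))"
      by (simp add: matrix_matrix_mult_def L_def) (intro sum.cong, auto)
    then show ?thesis by (simp add: sum_subtractf)
  qed
  define T where "T = L ** (Sigma_rho \<rho> ** C)"
  have T: "T $ k $ l = (if k = i then (Sigma_rho \<rho> ** C) $ i $ l
                         else if l = i then 0 else if k = l then 1 - \<rho> else 0)" for k l
    by (simp add: T_def LX SC)
  have "det T = s * (1 - \<rho>) ^ (CARD('n) - 1)"
  proof -
    have "det T = (\<Prod>k\<in>UNIV. T $ k $ k)" by (rule det_diagonal_except_row[of i]) (simp add: T)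
    also have "\<dots> = T $ i $ i * (\<Prod>k\<in>UNIV - {i}. T $ k $ k)"
      by (subst prod.remove[of _ i]) auto
    also have "\<dots> = s * (1 - \<rho>) ^ (CARD('n) - 1)"
      by (simp add: T SC card_Diff_singleton)
    finally show ?thesis .
  qed
  then show ?thesis unfolding T_def det_mul det_L det_C s_def by simp
qed

lemma det_scaleR: "det (c *\<^sub>R A :: real^'n::finite^'n) = c ^ CARD('n) * det A"
proof -
  have "det (c *\<^sub>R mat 1 :: real^'n^'n) = c ^ CARD('n)"
    by (subst det_diagonal) (simp_all add: mat_def)
  moreover have "c *\<^sub>R A = (c *\<^sub>R mat 1) ** A" by (simp add: scalar_matrix_assoc[symmetric])
  ultimately show ?thesis by (simp add: det_mul)
qed

text \<open>Sherman-Morrison inverse of \<open>Sigma_rho \<rho> = (1 - \<rho>) I + \<rho> 1 1\<^sup>T\<close>.\<close>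

definition Sigma_rho_inv :: "real \<Rightarrow> real^'n::finite^'n" where
  "Sigma_rho_inv \<rho> =
     (\<chi> i k. (if i = k then 1 / (1 - \<rho>) else 0) - \<rho> / ((1 - \<rho>) * (1 - \<rho> + real CARD('n) * \<rho>)))"

lemma Sigma_rho_mult_inv:
  assumes "\<rho> \<noteq> 1" "1 - \<rho> + real CARD('n) * \<rho> \<noteq> 0"
  shows "Sigma_rho \<rho> ** (Sigma_rho_inv \<rho> :: real^'n::finite^'n) = mat 1"
proof -
  define u where "u = 1 / (1 - \<rho>)"
  define v where "v = \<rho> / ((1 - \<rho>) * (1 - \<rho> + real CARD('n) * \<rho>))"
  have "(Sigma_rho \<rho> ** (Sigma_rho_inv \<rho> :: real^'n^'n)) $ i $ k = (if i = k then 1 else 0)" for i k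
  proof -
    have "(Sigma_rho \<rho> ** (Sigma_rho_inv \<rho> :: real^'n^'n)) $ i $ k
        = (\<Sum>l\<in>UNIV. (if i = l then 1 else \<rho>) * ((if l = k then u else 0) - v))"
      unfolding matrix_matrix_mult_def Sigma_rho_inv_def vec_lambda_beta Sigma_rho_nth
        u_def[symmetric] v_def[symmetric] ..
    also have "\<dots> = (\<Sum>l\<in>UNIV. if l = k then (if i = l then 1 else \<rho>) * u else 0)
                   - (\<Sum>l\<in>UNIV. if i = l then 1 else \<rho>) * v"
      unfolding right_diff_distrib sum_subtractf sum_distrib_right by (intro arg_cong2[where f=minus] sum.cong) auto
    also have "\<dots> = (if i = k then 1 else \<rho>) * u - v * (1 + (real CARD('n) - 1) * \<rho>)"
      by (simp add: sum_Sigma_rho_row)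
    also have "\<dots> = (if i = k then 1 else 0)"
    proof -
      have "1 - \<rho> \<noteq> 0" using assms by simp
      then have "v * (1 - \<rho> + real CARD('n) * \<rho>) = \<rho> * u"
        using assms(2) unfolding u_def v_def by simp
      then have "v * (1 + (real CARD('n) - 1) * \<rho>) = \<rho> * u" by (simp add: algebra_simps)
      moreover have "(1 - \<rho>) * u = 1" using assms by (simp add: u_def)
      ultimately show ?thesis by (auto simp: algebra_simps)
    qed
    finally show ?thesis .
  qed
  then show ?thesis by (simp add: mat_def vec_eq_iff)
qed

lemma matrix_inv_unique:
  fixes A B :: "'a::field^'n::finite^'n"
  assumes "A ** B = mat 1"
  shows "matrix_inv A = B"
proof -
  have BA: "B ** A = mat 1" using assms matrix_left_right_inverse by blast
  have "A ** matrix_inv A = mat 1"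
    unfolding matrix_inv_def by (rule someI2[of _ B]) (use assms BA in auto)
  then have "B ** (A ** matrix_inv A) = B" by simp
  then show ?thesis by (simp add: matrix_mul_assoc BA)
qed

lemma matrix_inv_scaleR_Sigma_rho:
  assumes "\<rho> \<noteq> 1" "1 - \<rho> + real CARD('n) * \<rho> \<noteq> 0" "s \<noteq> 0"
  shows "matrix_inv (s *\<^sub>R Sigma_rho \<rho> :: real^'n::finite^'n) = (1 / s) *\<^sub>R Sigma_rho_inv \<rho>"
  using Sigma_rho_mult_inv[OF assms(1,2)] assms(3) by (intro matrix_inv_unique) (simp add: matrix_scalar_ac)

lemma inner_Sigma_rho_inv:
  "(y :: real^'n::finite) \<bullet> (Sigma_rho_inv \<rho> *v y)
     = ((\<Sum>i\<in>UNIV. (y $ i)\<^sup>2) - \<rho> / (1 - \<rho> + real CARD('n) * \<rho>) * (\<Sum>i\<in>UNIV. y $ i)\<^sup>2) / (1 - \<rho>)"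
proof -
  define v where "v = \<rho> / ((1 - \<rho>) * (1 - \<rho> + real CARD('n) * \<rho>))"
  have mv: "(Sigma_rho_inv \<rho> *v y) $ i = y $ i / (1 - \<rho>) - v * (\<Sum>k\<in>UNIV. y $ k)" for i
  proof -
    have "(Sigma_rho_inv \<rho> *v y) $ i = (\<Sum>k\<in>UNIV. (if k = i then y $ k / (1 - \<rho>) else 0) - v * y $ k)"
      unfolding matrix_vector_mult_def Sigma_rho_inv_def v_def[symmetric] vec_lambda_beta
      by (intro sum.cong) (auto simp: left_diff_distrib)
    then show ?thesis by (simp add: sum_subtractf sum_distrib_left)
  qed
  have "y \<bullet> (Sigma_rho_inv \<rho> *v y) = (\<Sum>i\<in>UNIV. y $ i * (y $ i / (1 - \<rho>) - v * (\<Sum>k\<in>UNIV. y $ k)))"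
    by (simp add: inner_vec_def mv)
  also have "\<dots> = (\<Sum>i\<in>UNIV. (y $ i)\<^sup>2) / (1 - \<rho>) - v * (\<Sum>i\<in>UNIV. y $ i)\<^sup>2"
    by (simp add: right_diff_distrib sum_subtractf sum_divide_distrib power2_eq_square
        sum_distrib_left sum_distrib_right algebra_simps)
  finally show ?thesis by (simp add: v_def diff_divide_distrib)
qed

section \<open>Gaussian integrals\<close>

lemma nn_integral_gaussian:
  fixes a b :: real
  assumes a: "a > 0"
  shows "(\<integral>\<^sup>+ t. ennreal (exp (- (a * t\<^sup>2) / 2 + b * t)) \<partial>lborel)
       = ennreal (sqrt (2 * pi / a) * exp (b\<^sup>2 / (2 * a)))"
proof -
  let ?\<sigma> = "1 / sqrt a" and ?c = "sqrt (2 * pi / a) * exp (b\<^sup>2 / (2 * a))"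
  have density: "exp (- (a * t\<^sup>2) / 2 + b * t) = ?c * normal_density (b / a) ?\<sigma> t" for t
  proof -
    have "- (a * t\<^sup>2) / 2 + b * t = b\<^sup>2 / (2 * a) + (- (t - b / a)\<^sup>2 * a / 2)"
      using a by (simp add: field_simps power2_eq_square)
    then have "exp (- (a * t\<^sup>2) / 2 + b * t) = exp (b\<^sup>2 / (2 * a)) * exp (- (t - b / a)\<^sup>2 * a / 2)"
      by (simp only: exp_add)
    then show ?thesis
      using a by (simp add: normal_density_def power_divide real_sqrt_divide)
  qed
  have "(\<integral>\<^sup>+ t. ennreal (exp (- (a * t\<^sup>2) / 2 + b * t)) \<partial>lborel)
      = (\<integral>\<^sup>+ t. ennreal ?c * ennreal (normal_density (b / a) ?\<sigma> t) \<partial>lborel)"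
    unfolding density using a by (intro nn_integral_cong) (simp add: ennreal_mult normal_density_nonneg)
  also have "\<dots> = ennreal ?c * (\<integral>\<^sup>+ t. ennreal (normal_density (b / a) ?\<sigma> t) \<partial>lborel)"
    by (rule nn_integral_cmult) simp
  also have "(\<integral>\<^sup>+ t. ennreal (normal_density (b / a) ?\<sigma> t) \<partial>lborel) = 1"
    using a by (subst nn_integral_eq_integral) (auto simp: normal_density_nonneg)
  finally show ?thesis by simp
qed

lemma nn_integral_lborel_vec_prod:
  fixes f :: "'n::finite \<Rightarrow> real \<Rightarrow> ennreal"
  assumes [measurable]: "\<And>i. f i \<in> borel_measurable borel"
  shows "(\<integral>\<^sup>+ y. (\<Prod>i\<in>UNIV. f i (y $ i)) \<partial>(lborel :: (real^'n) measure))
       = (\<Prod>i\<in>UNIV. \<integral>\<^sup>+ x. f i x \<partial>lborel)"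
proof -
  define idx :: "real^'n \<Rightarrow> 'n" where "idx u = (SOME i. axis i 1 = u)" for u
  have idx: "idx (axis i 1) = i" for i
    unfolding idx_def by (rule some_equality) (auto simp: axis_eq_axis)
  define g where "g u = f (idx u)" for u
  have Basis: "(Basis :: (real^'n) set) = (\<lambda>i. axis i 1) ` UNIV"
    by (auto simp: Basis_vec_def)
  have inj: "inj_on (\<lambda>i::'n. axis i (1::real)) UNIV"
    by (auto simp: inj_on_def axis_eq_axis)
  have "(\<Prod>i\<in>UNIV. f i (y $ i)) = (\<Prod>u\<in>Basis. g u (y \<bullet> u))" for y :: "real^'n"
    unfolding Basis prod.reindex[OF inj] by (simp add: g_def idx inner_axis o_def)
  moreover have "(\<Prod>i\<in>UNIV. \<integral>\<^sup>+ x. f i x \<partial>lborel)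
      = (\<Prod>u\<in>Basis. \<integral>\<^sup>+ x. g u x \<partial>lborel)"
    unfolding Basis prod.reindex[OF inj] by (simp add: g_def idx o_def)
  moreover have "(\<integral>\<^sup>+ y. (\<Prod>u\<in>Basis. g u (y \<bullet> u)) \<partial>(lborel :: (real^'n) measure))
      = (\<Prod>u\<in>Basis. \<integral>\<^sup>+ x. g u x \<partial>lborel)"
    by (rule nn_integral_lborel_prod) (auto simp: g_def)
  ultimately show ?thesis by simp
qed

lemma nn_integral_vec_gaussian:
  fixes a b :: real
  assumes a: "a > 0"
  shows "(\<integral>\<^sup>+ y. ennreal (exp (- (a * (\<Sum>i\<in>UNIV. (y $ i)\<^sup>2)) / 2 + b * (\<Sum>i\<in>UNIV. y $ i)))
           \<partial>(lborel :: (real^'n::finite) measure))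
       = ennreal ((sqrt (2 * pi / a) * exp (b\<^sup>2 / (2 * a))) ^ CARD('n))"
proof -
  have "ennreal (exp (- (a * (\<Sum>i\<in>UNIV. (y $ i)\<^sup>2)) / 2 + b * (\<Sum>i\<in>UNIV. y $ i)))
      = (\<Prod>i\<in>UNIV. ennreal (exp (- (a * (y $ i)\<^sup>2) / 2 + b * y $ i)))" for y :: "real^'n"
    by (simp add: prod_ennreal exp_sum[symmetric] sum_subtractf sum_divide_distrib sum_distrib_left)
  then have "(\<integral>\<^sup>+ y. ennreal (exp (- (a * (\<Sum>i\<in>UNIV. (y $ i)\<^sup>2)) / 2 + b * (\<Sum>i\<in>UNIV. y $ i)))
        \<partial>(lborel :: (real^'n) measure))
      = (\<Prod>i\<in>(UNIV :: 'n set). \<integral>\<^sup>+ t. ennreal (exp (- (a * t\<^sup>2) / 2 + b * t)) \<partial>lborel)"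
    by (simp only:) (rule nn_integral_lborel_vec_prod, measurable)
  also have "\<dots> = ennreal ((sqrt (2 * pi / a) * exp (b\<^sup>2 / (2 * a))) ^ CARD('n))"
    using a by (simp only: nn_integral_gaussian[OF a] prod_constant card_UNIV) (simp add: ennreal_power)
  finally show ?thesis .
qed

lemma nn_integral_exp_neg_quadform:
  fixes a \<beta> :: real
  assumes a: "a > 0" and \<beta>: "\<beta> \<ge> 0" and K\<beta>: "real CARD('n::finite) * \<beta> < 1"
  shows "(\<integral>\<^sup>+ y. ennreal (exp (- (a * ((\<Sum>i\<in>UNIV. (y $ i)\<^sup>2) - \<beta> * (\<Sum>i\<in>UNIV. y $ i)\<^sup>2)) / 2))
           \<partial>(lborel :: (real^'n) measure))
       = ennreal (sqrt (2 * pi / a) ^ CARD('n) / sqrt (1 - real CARD('n) * \<beta>))"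
proof -
  let ?K = "real CARD('n)"
  define c where "c = sqrt (a * \<beta>)"
  have c2: "c\<^sup>2 = a * \<beta>" using a \<beta> by (simp add: c_def)
  define q where "q y = (\<Sum>i\<in>UNIV. (y $ i)\<^sup>2)" for y :: "real^'n"
  define s where "s y = (\<Sum>i\<in>UNIV. y $ i)" for y :: "real^'n"
  define h where "h y w = exp (- (a * q y) / 2) * exp (- (1 * w\<^sup>2) / 2 + (c * s y) * w)" for y w
  have h_swap: "h y w = exp (- (w\<^sup>2) / 2) * exp (- (a * q y) / 2 + (c * w) * s y)" for y w
    by (simp add: h_def exp_add[symmetric] algebra_simps)
  have [measurable]: "q \<in> borel_measurable borel" "s \<in> borel_measurable borel"
    unfolding q_def s_def by measurable
  have [measurable]: "(\<lambda>(y, w). ennreal (h y w)) \<in> borel_measurable (lborel \<Otimes>\<^sub>M lborel)"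
    unfolding h_def by measurable
  \<comment> \<open>Hubbard-Stratonovich: an auxiliary Gaussian variable \<open>w\<close> linearises the square \<open>(s y)\<^sup>2\<close>,
    after which the integral over \<open>y\<close> factorises over the coordinates.\<close>
  have integral_w: "(\<integral>\<^sup>+ w. ennreal (h y w) \<partial>lborel)
      = ennreal (sqrt (2 * pi) * exp (- (a * (q y - \<beta> * (s y)\<^sup>2)) / 2))" for y
  proof -
    have "(\<integral>\<^sup>+ w. ennreal (h y w) \<partial>lborel)
        = ennreal (exp (- (a * q y) / 2)) * (\<integral>\<^sup>+ w. ennreal (exp (- (1 * w\<^sup>2) / 2 + (c * s y) * w)) \<partial>lborel)"
      unfolding h_def by (subst nn_integral_cmult[symmetric]) (auto simp: ennreal_mult)
    also have "\<dots> = ennreal (exp (- (a * q y) / 2) * (sqrt (2 * pi) * exp ((c * s y)\<^sup>2 / 2)))"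
      by (subst nn_integral_gaussian) (simp_all add: ennreal_mult)
    also have "exp (- (a * q y) / 2) * (sqrt (2 * pi) * exp ((c * s y)\<^sup>2 / 2))
        = sqrt (2 * pi) * exp (- (a * (q y - \<beta> * (s y)\<^sup>2)) / 2)"
      by (simp add: power_mult_distrib c2 exp_add[symmetric] algebra_simps add_divide_distrib[symmetric])
    finally show ?thesis .
  qed
  have integral_y: "(\<integral>\<^sup>+ y. ennreal (h y w) \<partial>lborel)
      = ennreal (sqrt (2 * pi / a) ^ CARD('n)) * ennreal (exp (- ((1 - ?K * \<beta>) * w\<^sup>2) / 2 + 0 * w))" for w
  proof -
    have "(\<integral>\<^sup>+ y. ennreal (h y w) \<partial>lborel)
        = ennreal (exp (- (w\<^sup>2) / 2))
          * (\<integral>\<^sup>+ y. ennreal (exp (- (a * q y) / 2 + (c * w) * s y)) \<partial>(lborel :: (real^'n) measure))"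
      unfolding h_swap by (subst nn_integral_cmult[symmetric]) (auto simp: ennreal_mult)
    also have "\<dots> = ennreal (exp (- (w\<^sup>2) / 2) * (sqrt (2 * pi / a) * exp ((c * w)\<^sup>2 / (2 * a))) ^ CARD('n))"
      unfolding q_def s_def nn_integral_vec_gaussian[OF a] using a by (simp add: ennreal_mult)
    also have "exp (- (w\<^sup>2) / 2) * (sqrt (2 * pi / a) * exp ((c * w)\<^sup>2 / (2 * a))) ^ CARD('n)
        = sqrt (2 * pi / a) ^ CARD('n) * exp (- ((1 - ?K * \<beta>) * w\<^sup>2) / 2 + 0 * w)"
      using a by (simp add: power_mult_distrib c2 exp_of_nat_mult[symmetric] exp_add[symmetric]
          algebra_simps add_divide_distrib[symmetric])
    finally show ?thesis using a by (simp add: ennreal_mult)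
  qed
  have "(\<integral>\<^sup>+ y. ennreal (exp (- (a * (q y - \<beta> * (s y)\<^sup>2)) / 2)) \<partial>lborel)
      = (\<integral>\<^sup>+ y. ennreal (1 / sqrt (2 * pi)) * (\<integral>\<^sup>+ w. ennreal (h y w) \<partial>lborel)
          \<partial>(lborel :: (real^'n) measure))"
    unfolding integral_w by (intro nn_integral_cong) (simp add: ennreal_mult[symmetric])
  also have "\<dots> = ennreal (1 / sqrt (2 * pi)) * (\<integral>\<^sup>+ y. (\<integral>\<^sup>+ w. ennreal (h y w) \<partial>lborel) \<partial>lborel)"
    by (rule nn_integral_cmult) measurable
  also have "(\<integral>\<^sup>+ y. (\<integral>\<^sup>+ w. ennreal (h y w) \<partial>lborel) \<partial>(lborel :: (real^'n) measure))
      = (\<integral>\<^sup>+ w. (\<integral>\<^sup>+ y. ennreal (h y w) \<partial>lborel) \<partial>lborel)"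
    by (rule lborel_pair.Fubini'[symmetric]) measurable
  also have "(\<integral>\<^sup>+ w. (\<integral>\<^sup>+ y. ennreal (h y w) \<partial>lborel) \<partial>lborel)
      = ennreal (sqrt (2 * pi / a) ^ CARD('n)) * ennreal (sqrt (2 * pi / (1 - ?K * \<beta>)))"
  proof -
    have "(\<integral>\<^sup>+ w. (\<integral>\<^sup>+ y. ennreal (h y w) \<partial>lborel) \<partial>lborel)
        = ennreal (sqrt (2 * pi / a) ^ CARD('n))
          * (\<integral>\<^sup>+ w. ennreal (exp (- ((1 - ?K * \<beta>) * w\<^sup>2) / 2 + 0 * w)) \<partial>lborel)"
      unfolding integral_y by (rule nn_integral_cmult) measurable
    also have "(\<integral>\<^sup>+ w. ennreal (exp (- ((1 - ?K * \<beta>) * w\<^sup>2) / 2 + 0 * w)) \<partial>lborel)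
        = ennreal (sqrt (2 * pi / (1 - ?K * \<beta>)))"
      using K\<beta> by (subst nn_integral_gaussian) simp_all
    finally show ?thesis .
  qed
  also have "ennreal (1 / sqrt (2 * pi))
        * (ennreal (sqrt (2 * pi / a) ^ CARD('n)) * ennreal (sqrt (2 * pi / (1 - ?K * \<beta>))))
      = ennreal (sqrt (2 * pi / a) ^ CARD('n) / sqrt (1 - ?K * \<beta>))"
    using a K\<beta> by (simp add: ennreal_mult[symmetric] real_sqrt_divide)
  finally show ?thesis by (simp add: q_def s_def)
qed

lemma continuous_on_matrix_vector_mult: "continuous_on S (\<lambda>y. (A :: real^'n::finite^'m::finite) *v y)"
  by (intro linear_continuous_on bounded_linear_intros matrix_vector_mul_bounded_linear)

lemma borel_measurable_mvn_density [measurable]: "mvn_density S \<in> borel_measurable borel"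
proof -
  have "(\<lambda>y. y \<bullet> (matrix_inv S *v y)) \<in> borel_measurable borel"
    by (intro borel_measurable_continuous_onI continuous_intros continuous_on_matrix_vector_mult)
  then show ?thesis unfolding mvn_density_def by measurable
qed

lemma prob_space_mvn_scaleR_Sigma_rho:
  assumes s: "s > 0" and \<rho>: "0 < \<rho>" "\<rho> < 1"
  shows "prob_space (mvn (s *\<^sub>R Sigma_rho \<rho> :: real^'n::finite^'n))"
proof
  let ?K = "real CARD('n)" and ?S = "s *\<^sub>R Sigma_rho \<rho> :: real^'n^'n"
  define d where "d = 1 - \<rho> + ?K * \<rho>"
  define \<beta> where "\<beta> = \<rho> / d"
  define a where "a = 1 / (s * (1 - \<rho>))"
  have K: "CARD('n) \<ge> 1" by (simp add: Suc_le_eq)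
  have d: "d > 0" using \<rho> K unfolding d_def by (smt (verit) mult_le_cancel_right1 of_nat_1 of_nat_mono)
  have a: "a > 0" using s \<rho> by (simp add: a_def)
  have K\<beta>: "1 - ?K * \<beta> = (1 - \<rho>) / d" using d by (simp add: \<beta>_def d_def field_simps)
  then have K\<beta>_less: "?K * \<beta> < 1" using \<rho> d by (smt (verit) divide_pos_pos)
  have inv: "matrix_inv ?S = (1 / s) *\<^sub>R Sigma_rho_inv \<rho>"
    by (rule matrix_inv_scaleR_Sigma_rho) (use \<rho> s d in \<open>auto simp: d_def\<close>)
  have quad: "y \<bullet> (matrix_inv ?S *v y) = a * ((\<Sum>i\<in>UNIV. (y $ i)\<^sup>2) - \<beta> * (\<Sum>i\<in>UNIV. y $ i)\<^sup>2)" for y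
    unfolding inv scaleR_matrix_vector_assoc[symmetric] inner_scaleR_right inner_Sigma_rho_inv
    by (simp add: a_def \<beta>_def d_def)
  have det: "(2 * pi) ^ CARD('n) * det ?S = (2 * pi / a) ^ CARD('n) / (1 - ?K * \<beta>)"
  proof -
    define p where "p = (2 * pi) ^ CARD('n) * s ^ CARD('n) * (1 - \<rho>) ^ (CARD('n) - 1)"
    have "(2 * pi / a) ^ CARD('n) = p * (1 - \<rho>)"
      using K by (cases "CARD('n)") (simp_all add: p_def a_def power_mult_distrib)
    moreover have "x * u / (u / d) = x * d" if "u \<noteq> 0" for x u :: real
      using that d by simp
    moreover have "1 + (?K - 1) * \<rho> = d" by (simp add: d_def algebra_simps)
    ultimately show ?thesis
      using \<rho> unfolding K\<beta> det_scaleR det_Sigma_rho by (simp add: p_def)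
  qed
  define D where "D = sqrt ((2 * pi) ^ CARD('n) * det ?S)"
  have D: "D = sqrt (2 * pi / a) ^ CARD('n) / sqrt (1 - ?K * \<beta>)"
    unfolding D_def det by (simp add: real_sqrt_divide real_sqrt_power)
  have D_pos: "D > 0" unfolding D using a K\<beta>_less by simp
  have "emeasure (mvn ?S) (space (mvn ?S)) = (\<integral>\<^sup>+ y. ennreal (mvn_density ?S y) \<partial>lborel)"
    by (simp add: mvn_def emeasure_density[of _ _ UNIV])
  also have "\<dots> = (\<integral>\<^sup>+ y. ennreal (1 / D) * ennreal (exp (- (a * ((\<Sum>i\<in>UNIV. (y $ i)\<^sup>2)
      - \<beta> * (\<Sum>i\<in>UNIV. y $ i)\<^sup>2)) / 2)) \<partial>(lborel :: (real^'n) measure))"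
    unfolding mvn_density_def quad D_def[symmetric]
    by (rule nn_integral_cong, subst ennreal_mult[symmetric]) (use D_pos in auto)
  also have "\<dots> = ennreal (1 / D) * ennreal D"
  proof -
    have "\<beta> \<ge> 0" using \<rho> d by (simp add: \<beta>_def)
    from nn_integral_exp_neg_quadform[OF a this K\<beta>_less]
    have "(\<integral>\<^sup>+ y. ennreal (exp (- (a * ((\<Sum>i\<in>UNIV. (y $ i)\<^sup>2) - \<beta> * (\<Sum>i\<in>UNIV. y $ i)\<^sup>2)) / 2))
        \<partial>(lborel :: (real^'n) measure)) = ennreal D"
      unfolding D .
    then show ?thesis by (subst nn_integral_cmult) simp_all
  qed
  also have "\<dots> = 1"
    using a K\<beta>_less by (simp add: D ennreal_mult[symmetric])
  finally show "emeasure (mvn ?S) (space (mvn ?S)) = 1" .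
qed

lemma prob_space_actor_innov:
  assumes "0 < \<rho>" "\<rho> < 1" "0 < \<theta>" "\<theta> < 1"
  shows "prob_space (actor_innov \<rho> \<theta> bj ej :: (int \<Rightarrow> real^'k::finite) measure)"
  unfolding actor_innov_def
proof (rule prob_space_PiM)
  have "\<theta>\<^sup>2 < 1" using assms by (simp add: power_less_one_iff abs_less_iff)
  then have "prob_space (mvn ((1 / (1 - \<theta>\<^sup>2)) *\<^sub>R Sigma_rho \<rho>) :: (real^'k) measure)"
    using assms by (intro prob_space_mvn_scaleR_Sigma_rho) auto
  moreover have "prob_space (mvn (Sigma_rho \<rho>) :: (real^'k) measure)"
    using prob_space_mvn_scaleR_Sigma_rho[of 1 \<rho>] assms by simp
  ultimately show "prob_space (if t = bj then mvn ((1 / (1 - \<theta>\<^sup>2)) *\<^sub>R Sigma_rho \<rho>)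
      else mvn (Sigma_rho \<rho>) :: (real^'k) measure)" for t
    by simp
qed

section \<open>Time series of partial orders\<close>

lemma active_Diff: "active (M - {j}) b e t = active M b e t - {j}"
  by (auto simp: active_def)

lemma po_series_in_HBE: "po_series M b e B E \<theta> (x :: 'a \<Rightarrow> int \<Rightarrow> real^'k::finite) \<in> HBE M b e B E"
proof -
  have "po_series M b e B E \<theta> x t \<in> partial_orders (active M b e t)" if "t \<in> {B..E}" for t
  proof -
    let ?R = "po_series M b e B E \<theta> x t"
    have R: "?R = {(i, i'). i \<in> active M b e t \<and> i' \<in> active M b e t \<and>
                (\<forall>k. latent_U \<theta> b x i t $ k > latent_U \<theta> b x i' t $ k)}"
      using that by (simp add: po_series_def)
    have "trans ?R" unfolding R by (auto simp: trans_def intro: less_trans)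
    moreover have "irrefl ?R" unfolding R irrefl_def by auto
    ultimately have "acyclic ?R" by (simp add: acyclic_irrefl)
    with \<open>trans ?R\<close> \<open>irrefl ?R\<close> show ?thesis unfolding partial_orders_def by (auto simp: R)
  qed
  then show ?thesis by (auto simp: HBE_def po_series_def)
qed

lemma delete_actor_po_series:
  "delete_actor M b e B E j (po_series M b e B E \<theta> x) = po_series (M - {j}) b e B E \<theta> x"
  by (auto simp: delete_actor_def po_series_def suborder_def active_Diff fun_eq_iff)

lemma finite_HBE:
  assumes "finite M"
  shows "finite (HBE M b e B E)"
proof -
  let ?extend = "\<lambda>(u :: int \<Rightarrow> ('a \<times> 'a) set) t. if t \<in> {B..E} then u t else {}"
  have "HBE M b e B E \<subseteq> ?extend ` (PiE {B..E} (\<lambda>_. Pow (M \<times> M)))"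
  proof
    fix h assume h: "h \<in> HBE M b e B E"
    have "h = ?extend (restrict h {B..E})" using h by (auto simp: HBE_def fun_eq_iff)
    moreover have "restrict h {B..E} \<in> PiE {B..E} (\<lambda>_. Pow (M \<times> M))"
      using h by (auto simp: HBE_def partial_orders_def active_def)
    ultimately show "h \<in> ?extend ` (PiE {B..E} (\<lambda>_. Pow (M \<times> M)))" by blast
  qed
  moreover have "finite (PiE {B..E} (\<lambda>_. Pow (M \<times> M)))"
    using assms by (intro finite_PiE) auto
  ultimately show ?thesis by (meson finite_surj)
qed

lemma po_series_restrict:
  assumes "\<And>t. active N b e t \<subseteq> J"
  shows "po_series N b e B E \<theta> (restrict x J) = po_series N b e B E \<theta> x"
  using assms by (auto simp: po_series_def latent_U_def fun_eq_iff subset_iff)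

lemma relation_eq_iff:
  "{(i, i'). i \<in> A \<and> i' \<in> A \<and> P i i'} = X
     \<longleftrightarrow> X \<subseteq> A \<times> A \<and> (\<forall>i\<in>A. \<forall>i'\<in>A. (i, i') \<in> X \<longleftrightarrow> P i i')"
  by blast

lemma po_series_eq_iff:
  "po_series N b e B E \<theta> x = h \<longleftrightarrow>
     (\<forall>t. t \<notin> {B..E} \<longrightarrow> h t = {}) \<and>
     (\<forall>t\<in>{B..E}. h t \<subseteq> active N b e t \<times> active N b e t \<and>
        (\<forall>i\<in>active N b e t. \<forall>i'\<in>active N b e t.
           (i, i') \<in> h t \<longleftrightarrow> (\<forall>k\<in>UNIV. latent_U \<theta> b x i t $ k > latent_U \<theta> b x i' t $ k)))"
proof -
  have pointwise: "po_series N b e B E \<theta> x t = h t \<longleftrightarrow>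
     (t \<notin> {B..E} \<longrightarrow> h t = {}) \<and>
     (t \<in> {B..E} \<longrightarrow> h t \<subseteq> active N b e t \<times> active N b e t \<and>
        (\<forall>i\<in>active N b e t. \<forall>i'\<in>active N b e t.
           (i, i') \<in> h t \<longleftrightarrow> (\<forall>k\<in>UNIV. latent_U \<theta> b x i t $ k > latent_U \<theta> b x i' t $ k)))" for t
    unfolding po_series_def by (cases "t \<in> {B..E}") (simp_all only: if_True if_False relation_eq_iff, auto)
  show ?thesis unfolding fun_eq_iff pointwise all_conj_distrib Ball_def ..
qed

section \<open>Measurability of the latent events\<close>

lemma borel_measurable_vec_nth [measurable (raw)]:
  fixes f :: "'a \<Rightarrow> 'b::real_normed_vector^'n::finite"
  assumes "f \<in> borel_measurable M"
  shows "(\<lambda>x. f x $ i) \<in> borel_measurable M"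
  by (rule borel_measurable_continuous_on[OF _ assms])
     (intro linear_continuous_on bounded_linear_vec_nth)

lemma borel_measurable_ar:
  fixes F :: "int \<Rightarrow> (real^'k::finite) measure"
  assumes x: "x \<in> measurable M (PiM {bj..ej} F)" and sets_F: "\<And>t. sets (F t) = sets borel"
    and \<theta>: "\<theta> \<in> borel_measurable M"
  shows "int n \<le> ej - bj \<Longrightarrow> (\<lambda>z. ar (\<theta> z) bj (x z) n) \<in> borel_measurable M"
proof (induction n)
  case 0
  have "(\<lambda>z. x z bj) \<in> measurable M (F bj)"
    using 0 by (intro measurable_compose[OF x measurable_component_singleton]) auto
  then show ?case by (simp add: measurable_cong_sets[OF refl sets_F])
next
  case (Suc n)
  have "(\<lambda>z. x z (bj + int (Suc n))) \<in> measurable M (F (bj + int (Suc n)))"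
    using Suc.prems by (intro measurable_compose[OF x measurable_component_singleton]) auto
  then have "(\<lambda>z. x z (bj + int (Suc n))) \<in> borel_measurable M"
    by (simp add: measurable_cong_sets[OF refl sets_F])
  with Suc show ?case
    by (simp only: ar.simps) (intro borel_measurable_add borel_measurable_scaleR \<theta>, simp_all)
qed

lemma borel_measurable_latent_U:
  fixes F :: "'a \<Rightarrow> int \<Rightarrow> (real^'k::finite) measure"
  assumes x: "x \<in> measurable M (PiM N (\<lambda>i. PiM {b i..e i} (F i)))"
    and sets_F: "\<And>i t. sets (F i t) = sets borel"
    and \<theta>: "\<theta> \<in> borel_measurable M"
    and "i \<in> active N b e t"
  shows "(\<lambda>z. latent_U (\<theta> z) b (x z) i t) \<in> borel_measurable M"
proof -
  have "(\<lambda>z. x z i) \<in> measurable M (PiM {b i..e i} (F i))"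
    using assms(4) by (intro measurable_compose[OF x measurable_component_singleton]) (simp add: active_def)
  from borel_measurable_ar[OF this sets_F \<theta>, of "nat (t - b i)"] assms(4)
  show ?thesis by (simp add: latent_U_def active_def)
qed

lemma pred_po_series_eq:
  fixes F :: "'a \<Rightarrow> int \<Rightarrow> (real^'k::finite) measure"
  assumes "finite N"
    and x: "x \<in> measurable M (PiM N (\<lambda>i. PiM {b i..e i} (F i)))"
    and sets_F: "\<And>i t. sets (F i t) = sets borel"
    and \<theta>: "\<theta> \<in> borel_measurable M"
  shows "Measurable.pred M (\<lambda>z. po_series N b e B E (\<theta> z) (x z) = h)"
proof -
  have "(\<lambda>z. latent_U (\<theta> z) b (x z) i t $ k) \<in> borel_measurable M" if "i \<in> active N b e t" for i t k
    using that by (intro borel_measurable_vec_nth borel_measurable_latent_U[OF x sets_F \<theta>])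
  moreover have "finite (active N b e t)" for t using assms(1) by (simp add: active_def)
  ultimately show ?thesis
    unfolding po_series_eq_iff
    by (intro pred_intros_logic pred_intros_finite finite_atLeastAtMost_int finite_UNIV
        borel_measurable_pred_less) (auto intro: measurable_const)
qed

section \<open>Deleting an actor for fixed hyperparameters\<close>

definition series_prob :: "'k::finite itself \<Rightarrow> 'a set \<Rightarrow> ('a \<Rightarrow> int) \<Rightarrow> ('a \<Rightarrow> int) \<Rightarrow> int \<Rightarrow> int
    \<Rightarrow> real \<Rightarrow> real \<Rightarrow> (int \<Rightarrow> ('a \<times> 'a) set) \<Rightarrow> real" where
  "series_prob K N b e B E \<rho> \<theta> h = measure (latent_measure N b e \<rho> \<theta> :: ('a \<Rightarrow> int \<Rightarrow> real^'k) measure)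
     {x \<in> space (latent_measure N b e \<rho> \<theta>). po_series N b e B E \<theta> x = h}"

lemma prior_prob_eq_integral_series_prob:
  "prior_prob K N b e B E \<gamma> h
     = (\<integral>\<rho>. (\<integral>\<theta>. series_prob K N b e B E \<rho> \<theta> h \<partial>unif01) \<partial>beta_measure 1 \<gamma>)"
  by (simp add: prior_prob_def series_prob_def)

lemma sets_po_series_event:
  assumes "finite N"
  shows "{x \<in> space (latent_measure N b e \<rho> \<theta>). po_series N b e B E \<theta> x = h}
          \<in> sets (latent_measure N b e \<rho> \<theta> :: ('a \<Rightarrow> int \<Rightarrow> real^'k::finite) measure)"
proof -
  have "Measurable.pred (latent_measure N b e \<rho> \<theta> :: ('a \<Rightarrow> int \<Rightarrow> real^'k) measure)
      (\<lambda>x. po_series N b e B E \<theta> (id x) = h)"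
    unfolding latent_measure_def actor_innov_def
    by (rule pred_po_series_eq[OF assms,
          where F = "\<lambda>i t. if t = b i then mvn ((1 / (1 - \<theta>\<^sup>2)) *\<^sub>R Sigma_rho \<rho>) else mvn (Sigma_rho \<rho>)"])
       (auto simp: mvn_def)
  then show ?thesis by (simp add: pred_def)
qed

lemma series_prob_delete_actor:
  fixes K :: "'k::finite itself"
  assumes "finite M" "0 < \<rho>" "\<rho> < 1" "0 < \<theta>" "\<theta> < 1"
  shows "series_prob K (M - {j}) b e B E \<rho> \<theta> g
     = (\<Sum>h\<in>HBE M b e B E. (if g = delete_actor M b e B E j h then 1 else 0) * series_prob K M b e B E \<rho> \<theta> h)"
proof -
  define F where "F = (\<lambda>i. actor_innov \<rho> \<theta> (b i) (e i) :: (int \<Rightarrow> real^'k) measure)"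
  let ?J = "M - {j}" and ?H = "{h \<in> HBE M b e B E. g = delete_actor M b e B E j h}"
  let ?P = "PiM M F" and ?Q = "PiM ?J F"
  define event where "event h = {x \<in> space ?P. po_series M b e B E \<theta> x = h}" for h
  interpret product_prob_space F M
    using prob_space_actor_innov assms(2-) by (intro product_prob_spaceI) (simp add: F_def)
  interpret P: prob_space ?P
    using prob_space_actor_innov assms(2-) by (intro prob_space_PiM) (simp add: F_def)
  have latent: "latent_measure M b e \<rho> \<theta> = ?P" "latent_measure ?J b e \<rho> \<theta> = ?Q"
    by (simp_all add: latent_measure_def F_def)
  have restrict_po_series: "po_series ?J b e B E \<theta> (restrict x ?J) = po_series ?J b e B E \<theta> x" for x
    by (rule po_series_restrict) (auto simp: active_def)
  have distr: "?Q = distr ?P ?Q (\<lambda>x. restrict x ?J)"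
    by (rule distr_restrict) (use assms in auto)
  have sets_event: "event h \<in> sets ?P" for h
    unfolding event_def latent[symmetric] using assms(1) by (rule sets_po_series_event)
  have sets_event_J: "{x \<in> space ?Q. po_series ?J b e B E \<theta> x = g} \<in> sets ?Q"
    unfolding latent[symmetric] using assms(1) by (intro sets_po_series_event) simp
  have "series_prob K ?J b e B E \<rho> \<theta> g
      = measure ?P ((\<lambda>x. restrict x ?J) -` {x \<in> space ?Q. po_series ?J b e B E \<theta> x = g} \<inter> space ?P)"
    unfolding series_prob_def latent
    by (subst distr, rule measure_distr[OF _ sets_event_J]) (rule measurable_restrict_subset, auto)
  also have "(\<lambda>x. restrict x ?J) -` {x \<in> space ?Q. po_series ?J b e B E \<theta> x = g} \<inter> space ?P = (\<Union>h\<in>?H. event h)"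
  proof -
    have "restrict x ?J \<in> space ?Q" if "x \<in> space ?P" for x
      using that by (auto simp: space_PiM PiE_def Pi_def)
    then show ?thesis
      using po_series_in_HBE by (auto simp: event_def restrict_po_series delete_actor_po_series)
  qed
  also have "measure ?P (\<Union>h\<in>?H. event h) = (\<Sum>h\<in>?H. measure ?P (event h))"
    using finite_HBE[OF assms(1)] sets_event
    by (intro P.finite_measure_finite_Union) (auto simp: disjoint_family_on_def event_def)
  also have "\<dots> = (\<Sum>h\<in>HBE M b e B E. (if g = delete_actor M b e B E j h then 1 else 0) * measure ?P (event h))"
    using finite_HBE[OF assms(1)] by (simp add: sum.inter_filter if_distrib[of "\<lambda>c. c * _"] cong: if_cong)
  finally show ?thesis by (simp add: series_prob_def latent event_def)
qed

section \<open>Joint measurability in the hyperparameters\<close>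

lemma borel_measurable_vec_lambda:
  fixes f :: "'n::finite \<Rightarrow> 'a \<Rightarrow> 'b::euclidean_space"
  assumes "\<And>k. f k \<in> borel_measurable M"
  shows "(\<lambda>z. \<chi> k. f k z) \<in> borel_measurable M"
  unfolding borel_measurable_euclidean_space[where f = "\<lambda>z. \<chi> k. f k z"]
proof
  fix u :: "'b^'n" assume "u \<in> Basis"
  then obtain i v where u: "u = axis i v" and "v \<in> Basis" by (auto simp: Basis_vec_def)
  have "(\<lambda>z. (\<chi> k. f k z) \<bullet> u) = (\<lambda>z. f i z \<bullet> v)" by (simp add: u inner_axis)
  also have "\<dots> \<in> borel_measurable M" using assms by (intro borel_measurable_inner) auto
  finally show "(\<lambda>z. (\<chi> k. f k z) \<bullet> u) \<in> borel_measurable M" .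
qed

lemma borel_measurable_det:
  fixes A :: "'a \<Rightarrow> real^'n::finite^'n"
  assumes "\<And>i j. (\<lambda>z. A z $ i $ j) \<in> borel_measurable M"
  shows "(\<lambda>z. det (A z)) \<in> borel_measurable M"
  unfolding det_def using assms by measurable

lemma matrix_inv_singular:
  fixes A B :: "real^'n::finite^'n"
  assumes "det A = 0" "det B = 0"
  shows "matrix_inv A = matrix_inv B"
proof -
  have "(\<lambda>A'. C ** A' = mat 1 \<and> A' ** C = mat 1) = (\<lambda>_. False)" if "det C = 0" for C :: "real^'n^'n"
    using that invertible_det_nz by (auto simp: invertible_def fun_eq_iff)
  from this[OF assms(1)] this[OF assms(2)] show ?thesis unfolding matrix_inv_def by (simp only:)
qed

lemma matrix_inv_mult_cramer:
  fixes A :: "real^'n::finite^'n"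
  shows "matrix_inv A *v y = (if det A = 0 then matrix_inv (mat 0) *v y
           else (\<chi> k. det (\<chi> i j. if j = k then y $ i else A $ i $ j) / det A))"
proof (cases "det A = 0")
  case True then show ?thesis using matrix_inv_singular[OF _ det_0, of A] by simp
next
  case False
  then have "\<exists>A'. A ** A' = mat 1 \<and> A' ** A = mat 1"
    by (simp add: invertible_det_nz[symmetric] invertible_def)
  then have "A ** matrix_inv A = mat 1" unfolding matrix_inv_def by (metis (mono_tags, lifting) someI_ex)
  then have "A *v (matrix_inv A *v y) = y" by (simp add: matrix_vector_mul_assoc)
  then show ?thesis using cramer[OF False, of "matrix_inv A *v y" y] False by simp
qed

lemma borel_measurable_matrix_inv_mult:
  fixes A :: "'a \<Rightarrow> real^'n::finite^'n" and y :: "'a \<Rightarrow> real^'n"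
  assumes A: "A \<in> borel_measurable M" and y: "y \<in> borel_measurable M"
  shows "(\<lambda>z. matrix_inv (A z) *v y z) \<in> borel_measurable M"
proof -
  have A_entries: "(\<lambda>z. A z $ i $ j) \<in> borel_measurable M" for i j
    using A by (intro borel_measurable_vec_nth)
  have y_entries: "(\<lambda>z. y z $ i) \<in> borel_measurable M" for i
    using y by (intro borel_measurable_vec_nth)
  have det: "(\<lambda>z. det (A z)) \<in> borel_measurable M" by (rule borel_measurable_det[OF A_entries])
  have "(\<lambda>z. det (\<chi> i j. if j = k then y z $ i else A z $ i $ j)) \<in> borel_measurable M" for k
  proof (rule borel_measurable_det)
    show "(\<lambda>z. (\<chi> i j. if j = k then y z $ i else A z $ i $ j) $ i $ j) \<in> borel_measurable M" for i j
      by (cases "j = k") (simp_all add: A_entries y_entries)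
  qed
  then have regular: "(\<lambda>z. \<chi> k. det (\<chi> i j. if j = k then y z $ i else A z $ i $ j) / det (A z)) \<in> borel_measurable M"
    by (intro borel_measurable_vec_lambda borel_measurable_divide det)
  have singular: "(\<lambda>z. matrix_inv (mat 0 :: real^'n^'n) *v y z) \<in> borel_measurable M"
    by (rule borel_measurable_continuous_on[OF continuous_on_matrix_vector_mult y])
  show ?thesis
    by (subst matrix_inv_mult_cramer, rule measurable_If[OF singular regular]) (use det in measurable)
qed

lemma borel_measurable_mvn_density_param:
  fixes S :: "'a \<Rightarrow> real^'n::finite^'n" and y :: "'a \<Rightarrow> real^'n"
  assumes S: "S \<in> borel_measurable M" and y: "y \<in> borel_measurable M"
  shows "(\<lambda>z. mvn_density (S z) (y z)) \<in> borel_measurable M"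
proof -
  have "(\<lambda>z. det (S z)) \<in> borel_measurable M"
    using S by (intro borel_measurable_det borel_measurable_vec_nth)
  moreover have "(\<lambda>z. y z \<bullet> (matrix_inv (S z) *v y z)) \<in> borel_measurable M"
    by (intro borel_measurable_inner y borel_measurable_matrix_inv_mult S)
  ultimately show ?thesis unfolding mvn_density_def by measurable
qed

lemma borel_measurable_Sigma_rho:
  assumes "f \<in> borel_measurable M"
  shows "(\<lambda>z. Sigma_rho (f z) :: real^'n::finite^'n) \<in> borel_measurable M"
  unfolding Sigma_rho_def by (intro borel_measurable_vec_lambda) (use assms in measurable)

lemma PiM_density:
  fixes N :: "'i \<Rightarrow> 'a measure" and f :: "'i \<Rightarrow> 'a \<Rightarrow> ennreal"
  assumes "finite I" and sigma_finite: "\<And>i. sigma_finite_measure (N i)"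
    and [measurable]: "\<And>i. f i \<in> borel_measurable (N i)"
    and finite_f: "\<And>i x. f i x < \<infinity>"
  shows "PiM I (\<lambda>i. density (N i) (f i)) = density (PiM I N) (\<lambda>x. \<Prod>i\<in>I. f i (x i))"
proof -
  interpret N: product_sigma_finite N by (simp add: product_sigma_finite_def sigma_finite)
  have "sigma_finite_measure (density (N i) (f i))" for i
    using finite_f[of i] by (subst sigma_finite_measure.sigma_finite_iff_density_finite[OF sigma_finite]) (auto simp: less_top)
  then interpret D: product_sigma_finite "\<lambda>i. density (N i) (f i)"
    by (simp add: product_sigma_finite_def)
  show ?thesis
  proof (rule D.PiM_eqI[OF \<open>finite I\<close>, symmetric])
    show "sets (density (PiM I N) (\<lambda>x. \<Prod>i\<in>I. f i (x i))) = sets (PiM I (\<lambda>i. density (N i) (f i)))"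
      unfolding sets_density by (rule sets_PiM_cong) auto
  next
    fix A assume "\<And>i. i \<in> I \<Longrightarrow> A i \<in> sets (density (N i) (f i))"
    then have A [measurable]: "\<And>i. i \<in> I \<Longrightarrow> A i \<in> sets (N i)" by simp
    have "indicator (PiE I A) x = (\<Prod>i\<in>I. indicator (A i) (x i) :: ennreal)" if "x \<in> space (PiM I N)" for x
      using that \<open>finite I\<close> by (auto simp: indicator_def space_PiM PiE_iff)
    then have "emeasure (density (PiM I N) (\<lambda>x. \<Prod>i\<in>I. f i (x i))) (PiE I A)
        = (\<integral>\<^sup>+ x. (\<Prod>i\<in>I. f i (x i) * indicator (A i) (x i)) \<partial>PiM I N)"
      using sets_PiM_I_finite[OF \<open>finite I\<close> A]
      by (subst emeasure_density) (auto intro!: nn_integral_cong simp: prod.distrib)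
    also have "\<dots> = (\<Prod>i\<in>I. \<integral>\<^sup>+ y. f i y * indicator (A i) y \<partial>N i)"
      by (rule N.product_nn_integral_prod[OF \<open>finite I\<close>]) measurable
    also have "\<dots> = (\<Prod>i\<in>I. emeasure (density (N i) (f i)) (A i))"
      by (intro prod.cong refl emeasure_density[symmetric]) auto
    finally show "emeasure (density (PiM I N) (\<lambda>x. \<Prod>i\<in>I. f i (x i))) (PiE I A)
        = (\<Prod>i\<in>I. emeasure (density (N i) (f i)) (A i))" .
  qed
qed

definition innov_cov :: "real \<Rightarrow> real \<Rightarrow> int \<Rightarrow> int \<Rightarrow> real^'k::finite^'k" where
  "innov_cov \<rho> \<theta> bj t = (if t = bj then (1 / (1 - \<theta>\<^sup>2)) *\<^sub>R Sigma_rho \<rho> else Sigma_rho \<rho>)"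

text \<open>A reference measure not depending on \<open>\<rho>\<close> and \<open>\<theta>\<close>: writing the latent law as a density with
  respect to it makes the conditional probabilities jointly measurable in the hyperparameters.\<close>

definition latent_lborel
    :: "'a set \<Rightarrow> ('a \<Rightarrow> int) \<Rightarrow> ('a \<Rightarrow> int) \<Rightarrow> ('a \<Rightarrow> int \<Rightarrow> real^'k::finite) measure" where
  "latent_lborel N b e = PiM N (\<lambda>i. PiM {b i..e i} (\<lambda>t. lborel))"

definition latent_density :: "'a set \<Rightarrow> ('a \<Rightarrow> int) \<Rightarrow> ('a \<Rightarrow> int) \<Rightarrow> real \<Rightarrow> real
    \<Rightarrow> ('a \<Rightarrow> int \<Rightarrow> real^'k::finite) \<Rightarrow> ennreal" where
  "latent_density N b e \<rho> \<theta> x =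
     (\<Prod>i\<in>N. \<Prod>t\<in>{b i..e i}. ennreal (mvn_density (innov_cov \<rho> \<theta> (b i) t) (x i t)))"

lemma sigma_finite_PiM_lborel: "sigma_finite_measure (PiM I (\<lambda>_. lborel :: ('b::euclidean_space) measure))"
  if "finite I"
proof -
  interpret product_sigma_finite "\<lambda>_. lborel :: 'b measure"
    by (simp add: product_sigma_finite_def sigma_finite_lborel)
  show ?thesis using that by (rule sigma_finite)
qed

lemma actor_innov_eq_density:
  "actor_innov \<rho> \<theta> bj ej = density (PiM {bj..ej} (\<lambda>t. lborel))
     (\<lambda>y. \<Prod>t\<in>{bj..ej}. ennreal (mvn_density (innov_cov \<rho> \<theta> bj t :: real^'k::finite^'k) (y t)))"
proof -
  have "actor_innov \<rho> \<theta> bj ej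
      = PiM {bj..ej} (\<lambda>t. density lborel (\<lambda>y. ennreal (mvn_density (innov_cov \<rho> \<theta> bj t :: real^'k^'k) y)))"
    unfolding actor_innov_def by (intro PiM_cong refl) (simp add: innov_cov_def mvn_def)
  also have "\<dots> = density (PiM {bj..ej} (\<lambda>t. lborel))
      (\<lambda>y. \<Prod>t\<in>{bj..ej}. ennreal (mvn_density (innov_cov \<rho> \<theta> bj t :: real^'k^'k) (y t)))"
    by (rule PiM_density) (auto simp: sigma_finite_lborel)
  finally show ?thesis .
qed

lemma latent_measure_eq_density:
  assumes "finite N"
  shows "latent_measure N b e \<rho> \<theta>
       = density (latent_lborel N b e) (latent_density N b e \<rho> \<theta> :: ('a \<Rightarrow> int \<Rightarrow> real^'k::finite) \<Rightarrow> ennreal)"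
  unfolding latent_measure_def actor_innov_eq_density latent_lborel_def latent_density_def
  using assms by (intro PiM_density) (auto simp: sigma_finite_PiM_lborel less_top[symmetric] ennreal_prod_eq_top)

lemma sets_latent_measure:
  "sets (latent_measure N b e \<rho> \<theta> :: ('a \<Rightarrow> int \<Rightarrow> real^'k::finite) measure) = sets (latent_lborel N b e)"
  unfolding latent_measure_def latent_lborel_def actor_innov_def
  by (intro sets_PiM_cong refl) (simp add: mvn_def)

lemma borel_measurable_innov_cov:
  assumes "\<rho> \<in> borel_measurable M" "\<theta> \<in> borel_measurable M"
  shows "(\<lambda>z. innov_cov (\<rho> z) (\<theta> z) bj t :: real^'k::finite^'k) \<in> borel_measurable M"
  unfolding innov_cov_def using assms
  by (cases "t = bj") (auto intro!: borel_measurable_scaleR borel_measurable_Sigma_rho)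

lemma borel_measurable_latent_density:
  assumes x: "x \<in> measurable M (latent_lborel N b e :: ('a \<Rightarrow> int \<Rightarrow> real^'k::finite) measure)"
    and "\<rho> \<in> borel_measurable M" "\<theta> \<in> borel_measurable M"
  shows "(\<lambda>z. latent_density N b e (\<rho> z) (\<theta> z) (x z)) \<in> borel_measurable M"
proof -
  have "(\<lambda>z. x z i t) \<in> borel_measurable M" if "i \<in> N" "t \<in> {b i..e i}" for i t
    using measurable_compose[OF measurable_compose[OF x[unfolded latent_lborel_def] measurable_component_singleton]
        measurable_component_singleton] that by simp
  then show ?thesis
    unfolding latent_density_def using assms(2,3)
    by (intro borel_measurable_prod_ennreal measurable_compose[OF _ measurable_ennreal]
        borel_measurable_mvn_density_param borel_measurable_innov_cov) auto
qed

lemma borel_measurable_series_prob: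
  fixes K :: "'k::finite itself"
  assumes "finite N"
  shows "(\<lambda>(\<rho>, \<theta>). series_prob K N b e B E \<rho> \<theta> h) \<in> borel_measurable (borel \<Otimes>\<^sub>M borel)"
proof -
  let ?L = "latent_lborel N b e :: ('a \<Rightarrow> int \<Rightarrow> real^'k) measure"
  let ?M = "(borel \<Otimes>\<^sub>M borel) \<Otimes>\<^sub>M ?L"
  define event where "event \<theta> = {x \<in> space ?L. po_series N b e B E \<theta> x = h}" for \<theta>
  interpret L: sigma_finite_measure ?L
  proof -
    interpret product_sigma_finite "\<lambda>i. PiM {b i..e i} (\<lambda>t. lborel :: (real^'k) measure)"
      by (simp add: product_sigma_finite_def sigma_finite_PiM_lborel)
    show "sigma_finite_measure ?L" unfolding latent_lborel_def using assms by (rule sigma_finite)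
  qed
  have snd: "snd \<in> measurable ?M (PiM N (\<lambda>i. PiM {b i..e i} (\<lambda>t. lborel :: (real^'k) measure)))"
    unfolding latent_lborel_def by (rule measurable_snd)
  have pred: "Measurable.pred ?M (\<lambda>z. po_series N b e B E (snd (fst z)) (snd z) = h)"
    by (rule pred_po_series_eq[OF assms snd]) auto
  have "(\<lambda>z. if po_series N b e B E (snd (fst z)) (snd z) = h then 1 else 0 :: ennreal) \<in> borel_measurable ?M"
    using pred unfolding pred_def by (intro measurable_If measurable_const) simp_all
  then have "(\<lambda>z. indicator (event (snd (fst z))) (snd z) :: ennreal) \<in> borel_measurable ?M"
    by (rule measurable_cong[THEN iffD1, rotated]) (auto simp: event_def indicator_def space_pair_measure)
  moreover have "(\<lambda>z. latent_density N b e (fst (fst z)) (snd (fst z)) (snd z)) \<in> borel_measurable ?M"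
    using snd by (intro borel_measurable_latent_density) (simp_all add: latent_lborel_def)
  ultimately have "(\<lambda>z. latent_density N b e (fst (fst z)) (snd (fst z)) (snd z) * indicator (event (snd (fst z))) (snd z))
      \<in> borel_measurable ?M"
    by (intro borel_measurable_times_ennreal)
  from L.borel_measurable_nn_integral_fst[OF this]
  have "(\<lambda>p. \<integral>\<^sup>+ x. latent_density N b e (fst p) (snd p) x * indicator (event (snd p)) x \<partial>?L)
      \<in> borel_measurable (borel \<Otimes>\<^sub>M borel)"
    by simp
  then have "(\<lambda>p. enn2real (\<integral>\<^sup>+ x. latent_density N b e (fst p) (snd p) x * indicator (event (snd p)) x \<partial>?L))
      \<in> borel_measurable (borel \<Otimes>\<^sub>M borel)"
    by (rule borel_measurable_enn2real)
  moreover have "series_prob K N b e B E \<rho> \<theta> h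
      = enn2real (\<integral>\<^sup>+ x. latent_density N b e \<rho> \<theta> x * indicator (event \<theta>) x \<partial>?L)" for \<rho> \<theta>
  proof -
    have "event \<theta> \<in> sets ?L"
      using sets_po_series_event[OF assms, of b e \<rho> \<theta> B E h]
      by (simp add: event_def sets_latent_measure sets_eq_imp_space_eq[OF sets_latent_measure])
    moreover have "latent_density N b e \<rho> \<theta> \<in> borel_measurable ?L"
      using borel_measurable_latent_density[of "\<lambda>x. x" ?L N b e "\<lambda>_. \<rho>" "\<lambda>_. \<theta>"] by simp
    ultimately show ?thesis
      unfolding series_prob_def measure_def latent_measure_eq_density[OF assms]
      by (simp add: emeasure_density event_def)
  qed
  ultimately show ?thesis by (simp add: case_prod_beta')
qed

section \<open>Integrating out the hyperparameters\<close>

lemma integral_eq_sum_AE: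
  fixes f :: "'a \<Rightarrow> real" and g :: "'b \<Rightarrow> 'a \<Rightarrow> real"
  assumes "finite H" "f \<in> borel_measurable M" "\<And>h. h \<in> H \<Longrightarrow> integrable M (g h)"
    and "AE x in M. f x = (\<Sum>h\<in>H. c h * g h x)"
  shows "integral\<^sup>L M f = (\<Sum>h\<in>H. c h * integral\<^sup>L M (g h))"
proof -
  have "integral\<^sup>L M f = integral\<^sup>L M (\<lambda>x. \<Sum>h\<in>H. c h * g h x)"
    using assms by (intro integral_cong_AE) auto
  also have "\<dots> = (\<Sum>h\<in>H. c h * integral\<^sup>L M (g h))"
    using assms(3) by (simp add: Bochner_Integration.integral_sum)
  finally show ?thesis .
qed

lemma prob_space_unif01: "prob_space unif01"
  unfolding unif01_def by (rule prob_space_uniform_measure) simp_all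

lemma AE_unif01: "AE \<theta> in unif01. 0 < \<theta> \<and> \<theta> < 1"
  unfolding unif01_def by (rule AE_uniform_measureI) auto

lemma AE_beta_measure: "AE \<rho> in beta_measure a c. 0 < \<rho> \<and> \<rho> < 1"
  unfolding beta_measure_def by (subst AE_density) (auto simp: beta_density_def split: if_splits)

lemma finite_measure_beta_measure:
  assumes "\<gamma> > 0"
  shows "finite_measure (beta_measure 1 \<gamma>)"
proof
  let ?f = "\<lambda>t::real. t powr (1 - 1) * (1 - t) powr (\<gamma> - 1) * (1 / Beta 1 \<gamma>)"
  have "Beta 1 \<gamma> > 0" using assms by (simp add: Beta_def Gamma_real_pos)
  moreover have "(?f has_integral (Beta 1 \<gamma> * (1 / Beta 1 \<gamma>))) {0<..<1}"
    using has_integral_Beta_real[of 1 \<gamma>] assms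
    by (intro has_integral_mult_left) (simp add: has_integral_Icc_iff_Ioo)
  ultimately have "(\<integral>\<^sup>+ x. ennreal (?f x) * indicator {0<..<1} x \<partial>lborel)
      = ennreal (Beta 1 \<gamma> * (1 / Beta 1 \<gamma>))"
    by (intro nn_integral_has_integral_lebesgue') auto
  moreover have "emeasure (beta_measure 1 \<gamma>) (space (beta_measure 1 \<gamma>))
      = (\<integral>\<^sup>+ x. ennreal (?f x) * indicator {0<..<1} x \<partial>lborel)"
    unfolding beta_measure_def
    by (subst emeasure_density) (auto simp: beta_density_def indicator_def intro!: nn_integral_cong)
  ultimately show "emeasure (beta_measure 1 \<gamma>) (space (beta_measure 1 \<gamma>)) \<noteq> \<infinity>" by simp
qed

lemma series_prob_bounded_AE:
  fixes K :: "'k::finite itself" and N :: "'a set"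
  assumes "0 < \<rho>" "\<rho> < 1"
  shows "AE \<theta> in unif01. 0 \<le> series_prob K N b e B E \<rho> \<theta> h \<and> series_prob K N b e B E \<rho> \<theta> h \<le> 1"
  using AE_unif01
proof eventually_elim
  case (elim \<theta>)
  then have "prob_space (latent_measure N b e \<rho> \<theta> :: ('a \<Rightarrow> int \<Rightarrow> real^'k) measure)"
    unfolding latent_measure_def using assms by (intro prob_space_PiM prob_space_actor_innov) auto
  then show ?case unfolding series_prob_def by (simp add: prob_space.prob_le_1)
qed

lemma borel_measurable_integral_series_prob:
  assumes "finite N"
  shows "(\<lambda>\<theta>. series_prob K N b e B E \<rho> \<theta> h) \<in> borel_measurable unif01"
    and "(\<lambda>\<rho>. \<integral>\<theta>. series_prob K N b e B E \<rho> \<theta> h \<partial>unif01) \<in> borel_measurable (beta_measure a c)"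
proof -
  interpret U: prob_space unif01 by (rule prob_space_unif01)
  note joint = borel_measurable_series_prob[OF assms, of K b e B E h]
  have sets: "sets unif01 = sets borel" "sets (beta_measure a c) = sets borel"
    by (simp_all add: unif01_def beta_measure_def)
  show "(\<lambda>\<theta>. series_prob K N b e B E \<rho> \<theta> h) \<in> borel_measurable unif01"
    using measurable_compose_Pair1[OF _ joint] by (simp add: measurable_cong_sets[OF sets(1) refl])
  have "(\<lambda>(\<rho>, \<theta>). series_prob K N b e B E \<rho> \<theta> h) \<in> borel_measurable (beta_measure a c \<Otimes>\<^sub>M unif01)"
    using joint by (simp add: measurable_cong_sets[OF sets_pair_measure_cong[OF sets(2,1)] refl])
  then show "(\<lambda>\<rho>. \<integral>\<theta>. series_prob K N b e B E \<rho> \<theta> h \<partial>unif01) \<in> borel_measurable (beta_measure a c)"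
    by (rule U.borel_measurable_lebesgue_integral)
qed

lemma integrable_unif01_series_prob:
  assumes "finite N" "0 < \<rho>" "\<rho> < 1"
  shows "integrable unif01 (\<lambda>\<theta>. series_prob K N b e B E \<rho> \<theta> h)"
proof -
  interpret U: prob_space unif01 by (rule prob_space_unif01)
  have "AE \<theta> in unif01. norm (series_prob K N b e B E \<rho> \<theta> h) \<le> 1"
    using series_prob_bounded_AE[OF assms(2,3), of K N b e B E h] by eventually_elim auto
  with borel_measurable_integral_series_prob(1)[OF assms(1)] show ?thesis
    by (intro U.integrable_const_bound)
qed

lemma integrable_beta_measure_integral_series_prob:
  assumes "finite N" "\<gamma> > 0"
  shows "integrable (beta_measure 1 \<gamma>) (\<lambda>\<rho>. \<integral>\<theta>. series_prob K N b e B E \<rho> \<theta> h \<partial>unif01)"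
proof -
  interpret U: prob_space unif01 by (rule prob_space_unif01)
  interpret Beta: finite_measure "beta_measure 1 \<gamma>" using assms(2) by (rule finite_measure_beta_measure)
  have bound: "norm (\<integral>\<theta>. series_prob K N b e B E \<rho> \<theta> h \<partial>unif01) \<le> 1" if "0 < \<rho>" "\<rho> < 1" for \<rho>
  proof -
    note integrable = integrable_unif01_series_prob[OF assms(1) that]
    have "(\<integral>\<theta>. series_prob K N b e B E \<rho> \<theta> h \<partial>unif01) \<le> 1"
      using series_prob_bounded_AE[OF that, of K N b e B E h] by (intro U.integral_le_const[OF integrable]) auto
    moreover have "0 \<le> (\<integral>\<theta>. series_prob K N b e B E \<rho> \<theta> h \<partial>unif01)"
      using series_prob_bounded_AE[OF that, of K N b e B E h] by (intro integral_nonneg_AE) auto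
    ultimately show ?thesis by simp
  qed
  have "AE \<rho> in beta_measure 1 \<gamma>. norm (\<integral>\<theta>. series_prob K N b e B E \<rho> \<theta> h \<partial>unif01) \<le> 1"
    using AE_beta_measure by eventually_elim (use bound in auto)
  with borel_measurable_integral_series_prob(2)[OF assms(1)] show ?thesis
    by (intro Beta.integrable_const_bound)
qed

lemma integral_unif01_series_prob_delete_actor:
  assumes "finite M" "0 < \<rho>" "\<rho> < 1"
  shows "(\<integral>\<theta>. series_prob K (M - {j}) b e B E \<rho> \<theta> g \<partial>unif01)
     = (\<Sum>h\<in>HBE M b e B E. (if g = delete_actor M b e B E j h then 1 else 0) *
          (\<integral>\<theta>. series_prob K M b e B E \<rho> \<theta> h \<partial>unif01))"
proof (rule integral_eq_sum_AE)
  show "AE \<theta> in unif01. series_prob K (M - {j}) b e B E \<rho> \<theta> g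
      = (\<Sum>h\<in>HBE M b e B E. (if g = delete_actor M b e B E j h then 1 else 0) * series_prob K M b e B E \<rho> \<theta> h)"
    using AE_unif01 by eventually_elim (use assms series_prob_delete_actor in auto)
qed (simp_all add: assms finite_HBE borel_measurable_integral_series_prob(1) integrable_unif01_series_prob)

theorem proposition1:
  fixes M :: "'a set" and b e :: "'a \<Rightarrow> int" and B E :: int and \<gamma> :: real and j :: 'a
    and g :: "int \<Rightarrow> ('a \<times> 'a) set"
  assumes "finite M" and "j \<in> M" and "\<gamma> > 0"
    and "\<forall>i \<in> M. B \<le> b i \<and> b i \<le> e i \<and> e i \<le> E"
    and "g \<in> HBE (M - {j}) b e B E"
  shows "prior_prob TYPE('k::finite) (M - {j}) b e B E \<gamma> g =
         (\<Sum>h \<in> HBE M b e B E.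
            (if g = delete_actor M b e B E j h then 1 else 0) * prior_prob TYPE('k) M b e B E \<gamma> h)"
  unfolding prior_prob_eq_integral_series_prob
proof (rule integral_eq_sum_AE)
  show "AE \<rho> in beta_measure 1 \<gamma>. (\<integral>\<theta>. series_prob TYPE('k) (M - {j}) b e B E \<rho> \<theta> g \<partial>unif01)
      = (\<Sum>h\<in>HBE M b e B E. (if g = delete_actor M b e B E j h then 1 else 0) *
          (\<integral>\<theta>. series_prob TYPE('k) M b e B E \<rho> \<theta> h \<partial>unif01))"
    using AE_beta_measure by eventually_elim (use assms(1) integral_unif01_series_prob_delete_actor in auto)
qed (simp_all add: assms(1,3) finite_HBE borel_measurable_integral_series_prob(2) integrable_beta_measure_integral_series_prob)

end
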